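(* In the discrete first-price auction (under either tie rule), let $\beta$ be a bidding function used by some player in an equilibrium. Then for any $v,v'\in X$ with $v'>v$, we have $\beta(v')\ge\beta(v)$.
   Context: Model. There are $n\ge 2$ risk-neutral bidders competing for one indivisible object. Normalise the grid so that values and bids lie in $X=\{0,1,2,\dots,x\}$ for some $x\in\mathbb N$. Each bidder $i$ privately learns a value $v_i\in X$; values are drawn independently across bidders and every element of $X$ has strictly positive probability. Each bidder submits a bid $b_i\in X$. A (pure) strategy of bidder $i$ is a bidding function $\beta_i:X\to X$. Tie rules: in the model without ties, bidder $i$ wins iff $b_i>b_j$ for all $j\neq i$ (if the highest bid is tied, nobody wins); in the model with ties, if $m$ bidders submit the highest bid, each of them wins with probability $1/m$. In the first-price auction, a bidder with value $v_i$ bidding $b_i$ gets expected payoff $(v_i-b_i)\Pr(i\text{ wins})$. An equilibrium is a profile of bidding functions such that each bidder's bidding function maximises their expected payoff given the others' bidding functions (a pure-strategy Bayes–Nash equilibrium) and such that no bidder uses a weakly dominated bidding function (a bidding function is weakly dominated if some other bidding function yields at least as high expected payoff against every profile of opponents' bidding functions, and strictly higher against some). *)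

theory Defs
  imports Complex_Main "HOL-Library.FuncSet"
begin

text \<open>Bidders are 0,...,n-1; values and bids lie in X = {0..x}.
  A bidding function is a map nat => nat, only its values on X matter.
  A profile b assigns to bidder j the bidding function b j.
  p j v is the probability that bidder j has value v.\<close>

datatype tie_rule = NoTies | Ties

definition valid_bf :: "nat \<Rightarrow> (nat \<Rightarrow> nat) \<Rightarrow> bool" where
  "valid_bf x \<beta> \<longleftrightarrow> (\<forall>v\<le>x. \<beta> v \<le> x)"

definition valid_profile :: "nat \<Rightarrow> nat \<Rightarrow> (nat \<Rightarrow> nat \<Rightarrow> nat) \<Rightarrow> bool" where
  "valid_profile n x b \<longleftrightarrow> (\<forall>j<n. valid_bf x (b j))"

definition valid_dists :: "nat \<Rightarrow> nat \<Rightarrow> (nat \<Rightarrow> nat \<Rightarrow> real) \<Rightarrow> bool" where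
  "valid_dists n x p \<longleftrightarrow> (\<forall>j<n. (\<forall>v\<le>x. p j v > 0) \<and> (\<Sum>v\<le>x. p j v) = 1)"

definition win_share :: "tie_rule \<Rightarrow> nat \<Rightarrow> nat \<Rightarrow> (nat \<Rightarrow> nat) \<Rightarrow> nat \<Rightarrow> real" where
  "win_share r n i bd c =
     (case r of
        NoTies \<Rightarrow> (if \<forall>j\<in>{0..<n}-{i}. bd j < c then 1 else 0)
      | Ties \<Rightarrow> (if \<forall>j\<in>{0..<n}-{i}. bd j \<le> c
                 then 1 / real (card {j\<in>{0..<n}-{i}. bd j = c} + 1) else 0))"

definition win_prob :: "tie_rule \<Rightarrow> nat \<Rightarrow> nat \<Rightarrow> (nat \<Rightarrow> nat \<Rightarrow> real)
    \<Rightarrow> (nat \<Rightarrow> nat \<Rightarrow> nat) \<Rightarrow> nat \<Rightarrow> nat \<Rightarrow> real" where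
  "win_prob r n x p b i c =
     (\<Sum>w\<in>PiE ({0..<n}-{i}) (\<lambda>_. {0..x}).
        (\<Prod>j\<in>{0..<n}-{i}. p j (w j)) * win_share r n i (\<lambda>j. b j (w j)) c)"

definition interim_payoff :: "tie_rule \<Rightarrow> nat \<Rightarrow> nat \<Rightarrow> (nat \<Rightarrow> nat \<Rightarrow> real)
    \<Rightarrow> (nat \<Rightarrow> nat \<Rightarrow> nat) \<Rightarrow> nat \<Rightarrow> nat \<Rightarrow> nat \<Rightarrow> real" where
  "interim_payoff r n x p b i v c = (real v - real c) * win_prob r n x p b i c"

text \<open>Ex-ante expected payoff of bidder i using bidding function beta against the
  opponents' bidding functions in profile b (the component b i is ignored).\<close>
definition exp_payoff :: "tie_rule \<Rightarrow> nat \<Rightarrow> nat \<Rightarrow> (nat \<Rightarrow> nat \<Rightarrow> real)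
    \<Rightarrow> (nat \<Rightarrow> nat \<Rightarrow> nat) \<Rightarrow> nat \<Rightarrow> (nat \<Rightarrow> nat) \<Rightarrow> real" where
  "exp_payoff r n x p b i \<beta> = (\<Sum>v\<le>x. p i v * interim_payoff r n x p b i v (\<beta> v))"

definition weakly_dominated :: "tie_rule \<Rightarrow> nat \<Rightarrow> nat \<Rightarrow> (nat \<Rightarrow> nat \<Rightarrow> real)
    \<Rightarrow> nat \<Rightarrow> (nat \<Rightarrow> nat) \<Rightarrow> bool" where
  "weakly_dominated r n x p i \<beta> \<longleftrightarrow>
     (\<exists>\<beta>'. valid_bf x \<beta>' \<and>
        (\<forall>b. valid_profile n x b \<longrightarrow> exp_payoff r n x p b i \<beta> \<le> exp_payoff r n x p b i \<beta>') \<and>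
        (\<exists>b. valid_profile n x b \<and> exp_payoff r n x p b i \<beta> < exp_payoff r n x p b i \<beta>'))"

definition equilibrium :: "tie_rule \<Rightarrow> nat \<Rightarrow> nat \<Rightarrow> (nat \<Rightarrow> nat \<Rightarrow> real)
    \<Rightarrow> (nat \<Rightarrow> nat \<Rightarrow> nat) \<Rightarrow> bool" where
  "equilibrium r n x p b \<longleftrightarrow> valid_profile n x b \<and>
     (\<forall>i<n. (\<forall>\<beta>'. valid_bf x \<beta>' \<longrightarrow> exp_payoff r n x p b i \<beta>' \<le> exp_payoff r n x p b i (b i))
            \<and> \<not> weakly_dominated r n x p i (b i))"

end

theory Submission
  imports Defs
begin

text \<open>Bidding above one's value is weakly dominated by bidding the value: it never earns
  more, and it loses strictly against opponents who all bid zero. So in equilibrium nobody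
  overbids, in particular opponents of value 0 bid 0, and every positive bid wins with positive
  probability. If now \<open>c = \<beta> v > c' = \<beta> v'\<close> for \<open>v < v'\<close>, adding the two optimality
  conditions of types \<open>v\<close> and \<open>v'\<close> shows that \<open>c\<close> wins no more often than \<open>c'\<close>; since \<open>c'\<close>
  is also cheaper and \<open>c\<close> wins with positive probability, type \<open>v\<close> would strictly prefer \<open>c'\<close>.\<close>

lemma prod_valid_dists_pos:
  assumes "valid_dists n x p" and "w \<in> PiE ({0..<n}-{i}) (\<lambda>_. {0..x})"
  shows "0 < (\<Prod>j\<in>{0..<n}-{i}. p j (w j))"
proof (rule prod_pos)
  fix j assume "j \<in> {0..<n}-{i}"
  with assms show "0 < p j (w j)"
    unfolding valid_dists_def by (auto simp: PiE_def Pi_def)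
qed

lemma win_share_nonneg: "0 \<le> win_share r n i bd c"
  unfolding win_share_def by (cases r) auto

lemma win_prob_nonneg:
  assumes "valid_dists n x p"
  shows "0 \<le> win_prob r n x p b i c"
  unfolding win_prob_def
  using prod_valid_dists_pos[OF assms] win_share_nonneg
  by (intro sum_nonneg) (simp add: less_imp_le)

lemma win_prob_pos:
  assumes "valid_dists n x p" and "\<forall>j\<in>{0..<n}-{i}. b j 0 = 0" and "0 < c"
  shows "0 < win_prob r n x p b i c"
  unfolding win_prob_def
proof (rule sum_pos2)
  let ?W = "PiE ({0..<n}-{i}) (\<lambda>_. {0..x})"
  let ?w0 = "restrict (\<lambda>_. 0) ({0..<n}-{i})"
  show "finite ?W" by (simp add: finite_PiE)
  show "?w0 \<in> ?W" by auto
  have "{j\<in>{0..<n}-{i}. b j (?w0 j) = c} = {}" using assms(2,3) by auto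
  then have "0 < win_share r n i (\<lambda>j. b j (?w0 j)) c"
    using assms(2,3) unfolding win_share_def by (cases r) auto
  then show "0 < (\<Prod>j\<in>{0..<n}-{i}. p j (?w0 j)) * win_share r n i (\<lambda>j. b j (?w0 j)) c"
    using prod_valid_dists_pos[OF assms(1) \<open>?w0 \<in> ?W\<close>] by simp
  show "0 \<le> (\<Prod>j\<in>{0..<n}-{i}. p j (w j)) * win_share r n i (\<lambda>j. b j (w j)) c"
    if "w \<in> ?W" for w
    using prod_valid_dists_pos[OF assms(1) that] win_share_nonneg by simp
qed

lemma exp_payoff_fun_upd:
  assumes "v \<le> x"
  shows "exp_payoff r n x p b i (\<beta>(v := c)) - exp_payoff r n x p b i \<beta>
    = p i v * (interim_payoff r n x p b i v c - interim_payoff r n x p b i v (\<beta> v))"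
proof -
  have "exp_payoff r n x p b i (\<beta>(v := c)) - exp_payoff r n x p b i \<beta>
      = (\<Sum>u\<le>x. if u = v
           then p i v * (interim_payoff r n x p b i v c - interim_payoff r n x p b i v (\<beta> v))
           else 0)"
    unfolding exp_payoff_def sum_subtractf[symmetric] by (rule sum.cong) (auto simp: algebra_simps)
  with assms show ?thesis by simp
qed

lemma best_response_interim_optimal:
  assumes "valid_dists n x p" and "i < n" and "valid_bf x \<beta>"
    and best: "\<forall>\<beta>'. valid_bf x \<beta>' \<longrightarrow> exp_payoff r n x p b i \<beta>' \<le> exp_payoff r n x p b i \<beta>"
    and "v \<le> x" and "c \<le> x"
  shows "interim_payoff r n x p b i v c \<le> interim_payoff r n x p b i v (\<beta> v)"
proof -
  have "valid_bf x (\<beta>(v := c))" using assms(3,6) unfolding valid_bf_def by auto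
  with best exp_payoff_fun_upd[OF \<open>v \<le> x\<close>]
  have "p i v * (interim_payoff r n x p b i v c - interim_payoff r n x p b i v (\<beta> v)) \<le> 0"
    by (metis diff_le_0_iff_le)
  moreover have "0 < p i v" using assms(1,2,5) unfolding valid_dists_def by auto
  ultimately show ?thesis by (simp add: mult_le_0_iff)
qed

lemma overbidding_weakly_dominated:
  assumes "valid_dists n x p" and "i < n" and "valid_bf x \<beta>"
    and "v \<le> x" and overbid: "v < \<beta> v"
  shows "weakly_dominated r n x p i \<beta>"
  unfolding weakly_dominated_def
proof (intro exI conjI allI impI)
  have "0 < p i v" using assms(1,2,4) unfolding valid_dists_def by auto
  have gain: "exp_payoff r n x p b i (\<beta>(v := v)) - exp_payoff r n x p b i \<beta>
      = p i v * - interim_payoff r n x p b i v (\<beta> v)" for b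
    using exp_payoff_fun_upd[OF \<open>v \<le> x\<close>] by (simp add: interim_payoff_def)
  show "valid_bf x (\<beta>(v := v))" using assms(3,4) unfolding valid_bf_def by auto
  show "exp_payoff r n x p b i \<beta> \<le> exp_payoff r n x p b i (\<beta>(v := v))" for b
  proof -
    have "interim_payoff r n x p b i v (\<beta> v) \<le> 0"
      using overbid win_prob_nonneg[OF assms(1)]
      by (simp add: interim_payoff_def mult_le_0_iff)
    with \<open>0 < p i v\<close> have "0 \<le> p i v * - interim_payoff r n x p b i v (\<beta> v)"
      by (simp add: mult_nonneg_nonpos)
    with gain[of b] show ?thesis by linarith
  qed
  let ?zero = "\<lambda>_ _. 0 :: nat"
  show "valid_profile n x ?zero" unfolding valid_profile_def valid_bf_def by auto
  have "0 < win_prob r n x p ?zero i (\<beta> v)"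
    using win_prob_pos[OF assms(1)] overbid by simp
  with overbid have "interim_payoff r n x p ?zero i v (\<beta> v) < 0"
    by (simp add: interim_payoff_def mult_neg_pos)
  with \<open>0 < p i v\<close> have "0 < p i v * - interim_payoff r n x p ?zero i v (\<beta> v)"
    by (simp add: mult_pos_neg)
  with gain[of ?zero]
  show "exp_payoff r n x p ?zero i \<beta> < exp_payoff r n x p ?zero i (\<beta>(v := v))" by linarith
qed

lemma equilibrium_no_overbidding:
  assumes "valid_dists n x p" and "equilibrium r n x p b" and "i < n" and "v \<le> x"
  shows "b i v \<le> v"
  using assms overbidding_weakly_dominated[of n x p i "b i" v r]
  unfolding equilibrium_def valid_profile_def by force

text \<open>Revealed preference: \<open>c\<close> is optimal for value \<open>v\<close> and \<open>c'\<close> for value \<open>v'\<close>, where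
  \<open>W\<close> and \<open>W'\<close> are their winning probabilities.\<close>

lemma optimal_bids_mono:
  fixes v v' c c' W W' :: real
  assumes "v < v'" and "c \<le> v" and "0 < W"
    and opt: "(v - c') * W' \<le> (v - c) * W"
    and opt': "(v' - c) * W \<le> (v' - c') * W'"
  shows "c \<le> c'"
proof (rule ccontr)
  assume "\<not> c \<le> c'"
  from opt opt' have "(v' - v) * W \<le> (v' - v) * W'" by (simp add: algebra_simps)
  with \<open>v < v'\<close> have "W \<le> W'" by simp
  have "(v - c) * W < (v - c') * W" using \<open>\<not> c \<le> c'\<close> \<open>0 < W\<close> by simp
  also have "\<dots> \<le> (v - c') * W'" using \<open>W \<le> W'\<close> \<open>\<not> c \<le> c'\<close> \<open>c \<le> v\<close> by simp
  finally show False using opt by simp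
qed

theorem lemma3:
  fixes r :: tie_rule and n x :: nat and p :: "nat \<Rightarrow> nat \<Rightarrow> real"
    and b :: "nat \<Rightarrow> nat \<Rightarrow> nat" and i v v' :: nat
  assumes "n \<ge> 2"
    and "valid_dists n x p"
    and "equilibrium r n x p b"
    and "i < n"
    and "v < v'" and "v' \<le> x"
  shows "b i v \<le> b i v'"
proof (cases "b i v = 0")
  case False
  have "v \<le> x" using assms(5,6) by simp
  have valid: "valid_bf x (b i)" and best: "\<forall>\<beta>'. valid_bf x \<beta>' \<longrightarrow>
      exp_payoff r n x p b i \<beta>' \<le> exp_payoff r n x p b i (b i)"
    using assms(3,4) unfolding equilibrium_def valid_profile_def by auto
  have "b j 0 = 0" if "j < n" for j
    using equilibrium_no_overbidding[OF assms(2,3) that, of 0] by simp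
  then have win: "0 < win_prob r n x p b i (b i v)"
    using win_prob_pos[OF assms(2)] False by simp
  have no_overbid: "real (b i v) \<le> real v"
    using equilibrium_no_overbidding[OF assms(2-4) \<open>v \<le> x\<close>] by simp
  have opt: "interim_payoff r n x p b i v (b i v') \<le> interim_payoff r n x p b i v (b i v)"
    using best_response_interim_optimal[OF assms(2,4) valid best \<open>v \<le> x\<close>] valid assms(6)
    unfolding valid_bf_def by simp
  have opt': "interim_payoff r n x p b i v' (b i v) \<le> interim_payoff r n x p b i v' (b i v')"
    using best_response_interim_optimal[OF assms(2,4) valid best assms(6)] valid \<open>v \<le> x\<close>
    unfolding valid_bf_def by simp
  have "real (b i v) \<le> real (b i v')"
    using optimal_bids_mono[OF _ no_overbid win opt[unfolded interim_payoff_def]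
        opt'[unfolded interim_payoff_def]] \<open>v < v'\<close> by simp
  then show ?thesis by simp
qed simp

end
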